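(* Let $k$ be a non-archimedean local field of residue characteristic $2$ with ring of integers $\mathfrak o$ and uniformizer $\varpi$. Let $\rho\in\mathfrak o$, $\ell\ge0$ an integer, and $X=\operatorname{meas}\{x\in\mathfrak o: x^2\equiv\rho \bmod \varpi^\ell\}$. Write $\rho=\eta^2+b$, where $b\mathfrak o$ is the quadratic defect of $\rho$. Then: (1) if $b\not\equiv0\bmod\varpi^\ell$, then $X=0$; (2) if $b\equiv0\bmod\varpi^\ell$ and $|\varpi^\ell|<|4\eta^2|$, then $X=2\,|\varpi^\ell/(2\eta)|$; (3) otherwise, $X=|\varpi|^{\lceil \ell/2\rceil}$.
   Context: The measure on $\mathfrak o$ is the additive Haar measure with $\mathfrak o$ of volume $1$; $|\cdot|$ is normalized by $|\varpi|=q^{-1}$, $q$ the residue field cardinality. The quadratic defect of $\rho\in k$ is the intersection of all ideals $b\mathfrak o$ over those $b\in k$ for which $\rho-b$ is a square in $k$ (it is $0$ when $\rho$ is a square). *)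

theory Defs
  imports "HOL-Analysis.Analysis"
begin

text \<open>A non-archimedean local field is modelled as a field type 'a together with an
absolute value av.  The valuation ring, its ideals, residue field, etc. are
expressed as subsets of 'a.\<close>

definition vring :: "('a::field \<Rightarrow> real) \<Rightarrow> 'a set" where
  "vring av = {x. av x \<le> 1}"

definition pideal :: "('a::field \<Rightarrow> real) \<Rightarrow> 'a \<Rightarrow> 'a set" where
  "pideal av c = {c * x | x. x \<in> vring av}"

text \<open>residue field o/p, as the set of residue classes x + p, x in o\<close>
definition residue_field :: "('a::field \<Rightarrow> real) \<Rightarrow> 'a set set" where
  "residue_field av = (\<lambda>x. {y \<in> vring av. av (y - x) < 1}) ` vring av"

definition nonarch_local_field :: "('a::field \<Rightarrow> real) \<Rightarrow> bool" where
  "nonarch_local_field av \<longleftrightarrow>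
     (\<forall>x. 0 \<le> av x) \<and> (\<forall>x. av x = 0 \<longleftrightarrow> x = 0) \<and>
     (\<forall>x y. av (x * y) = av x * av y) \<and>
     (\<forall>x y. av (x + y) \<le> max (av x) (av y)) \<and>
     \<comment> \<open>discretely valued, nontrivial\<close>
     (\<exists>p. 0 < av p \<and> av p < 1 \<and> (\<forall>x. av x < 1 \<longrightarrow> av x \<le> av p)) \<and>
     \<comment> \<open>finite residue field\<close>
     finite (residue_field av) \<and>
     \<comment> \<open>complete\<close>
     (\<forall>f::nat \<Rightarrow> 'a. (\<forall>e>0. \<exists>N. \<forall>m\<ge>N. \<forall>n\<ge>N. av (f m - f n) < e) \<longrightarrow>
        (\<exists>L. \<forall>e>0. \<exists>N. \<forall>n\<ge>N. av (f n - L) < e))"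

definition normalized_uniformizer :: "('a::field \<Rightarrow> real) \<Rightarrow> 'a \<Rightarrow> bool" where
  "normalized_uniformizer av w \<longleftrightarrow>
     av w < 1 \<and> (\<forall>x. av x < 1 \<longrightarrow> av x \<le> av w) \<and>
     av w = 1 / real (card (residue_field av))"

definition normalized_haar :: "('a::field \<Rightarrow> real) \<Rightarrow> 'a measure \<Rightarrow> bool" where
  "normalized_haar av M \<longleftrightarrow>
     space M = vring av \<and>
     sets M = sigma_sets (vring av) {{x \<in> vring av. av (x - a) \<le> r} | a r. a \<in> vring av} \<and>
     emeasure M (vring av) = 1 \<and>
     (\<forall>A \<in> sets M. \<forall>a \<in> vring av.
        (\<lambda>x. x + a) ` A \<in> sets M \<and> emeasure M ((\<lambda>x. x + a) ` A) = emeasure M A)"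

definition quadratic_defect :: "('a::field \<Rightarrow> real) \<Rightarrow> 'a \<Rightarrow> 'a set" where
  "quadratic_defect av rho = \<Inter> {pideal av c | c. \<exists>y. rho - c = y ^ 2}"

end

theory Submission
  imports Defs
begin

text \<open>Since \<open>\<rho> - (\<rho> - x\<^sup>2) = x\<^sup>2\<close>, minimality of the quadratic defect
gives \<open>|b| \<le> |x\<^sup>2 - \<rho>|\<close> for every \<open>x\<close>, so there are no solutions unless \<open>|b| \<le> |w\<^sup>l|\<close>.
In that case \<open>b\<close> can be dropped and the condition becomes \<open>|x - \<eta>| |x + \<eta>| \<le> |w\<^sup>l|\<close>,
where the two factors differ by \<open>2\<eta>\<close>. If \<open>|2\<eta>|\<^sup>2 \<le> |w\<^sup>l|\<close> this is the single disc
\<open>|x - \<eta>|\<^sup>2 \<le> |w\<^sup>l|\<close>; otherwise it is the disjoint union of the two discs of radius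
\<open>|w\<^sup>l/2\<eta>|\<close> around \<open>\<eta>\<close> and \<open>-\<eta>\<close>. A disc of radius \<open>|w|\<^sup>n\<close> in the valuation ring has
measure \<open>|w|\<^sup>n = q\<^sup>-\<^sup>n\<close>, because it is the disjoint union of \<open>q\<close> translates of the disc of
radius \<open>|w|\<^sup>n\<^sup>+\<^sup>1\<close>, one for each residue class.\<close>

locale nonarch_abs =
  fixes av :: "'a::field \<Rightarrow> real"
  assumes av_nonneg: "0 \<le> av x"
    and av_eq_0_iff: "av x = 0 \<longleftrightarrow> x = 0"
    and av_mult: "av (x * y) = av x * av y"
    and av_add_le_max: "av (x + y) \<le> max (av x) (av y)"
begin

lemma av_0 [simp]: "av 0 = 0"
  by (simp add: av_eq_0_iff)

lemma av_pos_iff: "0 < av x \<longleftrightarrow> x \<noteq> 0"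
  using av_nonneg[of x] av_eq_0_iff[of x] by linarith

lemma av_1 [simp]: "av 1 = 1"
proof -
  have "av 1 * av 1 = av 1 * 1" using av_mult[of 1 1] by simp
  moreover have "av 1 \<noteq> 0" by (simp add: av_eq_0_iff)
  ultimately show ?thesis by (metis mult_cancel_left)
qed

lemma av_minus [simp]: "av (- x) = av x"
proof -
  have "av (-1) * av (-1) = 1" using av_mult[of "-1" "-1"] by simp
  then have "(av (-1) - 1) * (av (-1) + 1) = 0" by (simp add: algebra_simps)
  then have "av (-1) = 1" using av_nonneg[of "-1"] by simp
  then show ?thesis using av_mult[of "-1" x] by simp
qed

lemma av_minus_commute: "av (x - y) = av (y - x)"
  by (metis av_minus minus_diff_eq)

lemma av_diff_le_max: "av (x - y) \<le> max (av x) (av y)"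
  using av_add_le_max[of x "- y"] by simp

lemma av_divide: "av (x / y) = av x / av y"
proof (cases "y = 0")
  case False
  then have "av (x / y) * av y = av x" by (metis av_mult nonzero_divide_eq_eq)
  then show ?thesis using False av_pos_iff[of y] by (simp add: eq_divide_eq)
qed simp

lemma av_power: "av (x ^ n) = av x ^ n"
  by (induction n) (simp_all add: av_mult)

lemma av_2_le_1: "av 2 \<le> 1"
  using av_add_le_max[of 1 1] by simp

lemma av_add_eq_larger: "av a < av b \<Longrightarrow> av (b + a) = av b"
  using av_add_le_max[of b a] av_add_le_max[of "b + a" "- a"] by auto

lemma av_mult_le_iff_square_le:
  assumes "z = y + d" and "av d * av d \<le> e"
  shows "av y * av z \<le> e \<longleftrightarrow> av y * av y \<le> e"
proof (cases "av d < av y")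
  case True
  then have "av z = av y" using assms(1) av_add_eq_larger by simp
  then show ?thesis by simp
next
  case False
  then have "av z \<le> av d" using assms(1) av_add_le_max[of y d] by simp
  then have "av y * av z \<le> e" and "av y * av y \<le> e"
    using False assms(2) av_nonneg[of y] av_nonneg[of z]
    by (meson mult_mono not_less order_trans)+
  then show ?thesis by simp
qed

text \<open>When \<open>|d|\<^sup>2 > e\<close>, the factors cannot both be small, and the large one has size \<open>|d|\<close>.\<close>
lemma av_mult_le_iff_near:
  assumes z: "z = y + d" and r: "r * av d = e" "0 \<le> r" "r < av d"
  shows "av y * av z \<le> e \<longleftrightarrow> av y \<le> r \<or> av z \<le> r"
proof -
  have d: "0 < av d" using r by linarith
  have y_small: "av z = av d" if "av y < av d"
    using av_add_eq_larger[OF that] z by (simp add: add.commute)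
  have z_small: "av y = av d" if "av z < av d"
    using av_add_eq_larger[of z "- d"] that z by (simp add: algebra_simps)
  have both_large: "e < av y * av z" if "av d \<le> av y" "av d \<le> av z"
  proof -
    have "e < av d * av d" using r d by (metis mult_strict_right_mono)
    also have "\<dots> \<le> av y * av z" using that d by (intro mult_mono) auto
    finally show ?thesis .
  qed
  show ?thesis
  proof
    assume h: "av y * av z \<le> e"
    show "av y \<le> r \<or> av z \<le> r"
    proof (cases "av y < av d")
      case True
      then have "av y * av d \<le> r * av d" using h r(1) y_small by simp
      then show ?thesis using d by simp
    next
      case False
      then have "av z < av d" using h both_large by fastforce
      then have "av z * av d \<le> r * av d" using h r(1) z_small by (simp add: mult.commute)
      then show ?thesis using d by simp
    qed
  next
    assume "av y \<le> r \<or> av z \<le> r"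
    then show "av y * av z \<le> e"
      using r y_small z_small d by (auto simp: mult_right_mono mult_left_mono mult.commute)
  qed
qed

lemma vring_iff: "x \<in> vring av \<longleftrightarrow> av x \<le> 1"
  unfolding vring_def by simp

lemma vring_add: "x \<in> vring av \<Longrightarrow> y \<in> vring av \<Longrightarrow> x + y \<in> vring av"
  unfolding vring_iff using av_add_le_max[of x y] by simp

lemma vring_diff: "x \<in> vring av \<Longrightarrow> y \<in> vring av \<Longrightarrow> x - y \<in> vring av"
  unfolding vring_iff using av_diff_le_max[of x y] by simp

lemma pideal_iff: "x \<in> pideal av c \<longleftrightarrow> av x \<le> av c"
proof (cases "c = 0")
  case True
  then show ?thesis using av_pos_iff[of x] by (auto simp: pideal_def vring_def intro: exI[of _ 0])
next
  case False
  then have c: "0 < av c" by (simp add: av_pos_iff)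
  show ?thesis
  proof
    assume "x \<in> pideal av c"
    then obtain y where "av y \<le> 1" "x = c * y" unfolding pideal_def vring_def by auto
    then show "av x \<le> av c" using c by (simp add: av_mult mult_left_le)
  next
    assume "av x \<le> av c"
    then have "x / c \<in> vring av" using c by (simp add: vring_iff av_divide)
    moreover have "x = c * (x / c)" using False by simp
    ultimately show "x \<in> pideal av c" unfolding pideal_def by blast
  qed
qed

end

locale normalized_local_field =
  fixes av :: "'a::field \<Rightarrow> real" and w :: 'a and M :: "'a measure"
  assumes local_field: "nonarch_local_field av"
    and uniformizer: "normalized_uniformizer av w"
    and haar: "normalized_haar av M"
begin

sublocale nonarch_abs av
  using local_field unfolding nonarch_local_field_def by unfold_locales auto

abbreviation q :: nat where
  "q \<equiv> card (residue_field av)"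

lemma av_w_lt_1: "av w < 1"
  and av_le_av_w: "av x < 1 \<Longrightarrow> av x \<le> av w"
  and av_w_eq: "av w = 1 / real q"
  using uniformizer unfolding normalized_uniformizer_def by auto

lemma finite_residue_field: "finite (residue_field av)"
  using local_field unfolding nonarch_local_field_def by blast

lemma av_w_pos: "0 < av w"
proof -
  have "residue_field av \<noteq> {}"
    unfolding residue_field_def vring_def by (auto intro: exI[of _ 0])
  then show ?thesis using finite_residue_field av_w_eq by (simp add: card_gt_0_iff)
qed

lemma w_nonzero: "w \<noteq> 0"
  using av_w_pos by auto

lemma av_w_power_le_1: "av w ^ n \<le> 1"
  using av_w_pos av_w_lt_1 by (simp add: power_le_one)

text \<open>An element of value between \<open>|w|\<^sup>n\<^sup>+\<^sup>1\<close> and \<open>|w|\<^sup>n\<close> is \<open>w\<^sup>n\<close> times a unit,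
since no value lies strictly between \<open>|w|\<close> and \<open>1\<close>.\<close>
lemma av_eq_power_of_av_w:
  assumes "x \<noteq> 0" "av x \<le> 1"
  shows "\<exists>k. av x = av w ^ k"
proof -
  obtain n where "av w ^ n < av x"
    using real_arch_pow_inv av_w_lt_1 assms(1) av_pos_iff by blast
  with assms show ?thesis
  proof (induction n arbitrary: x)
    case (Suc n)
    show ?case
    proof (cases "av w ^ n < av x")
      case False
      have "av (x / w ^ n) = av x / av w ^ n" by (simp add: av_divide av_power)
      then have "av w < av (x / w ^ n)" "av (x / w ^ n) \<le> 1"
        using Suc.prems(3) False av_w_pos by (simp_all add: less_divide_eq divide_le_eq mult.commute)
      then have "av (x / w ^ n) = 1" using av_le_av_w[of "x / w ^ n"] by linarith
      then have "av x = av w ^ n" using av_w_pos by (simp add: av_divide av_power divide_eq_1_iff)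
      then show ?thesis by blast
    qed (use Suc in blast)
  qed simp
qed

lemma space_M: "space M = vring av"
  and sets_M: "sets M = sigma_sets (vring av) {{x \<in> vring av. av (x - a) \<le> r} | a r. a \<in> vring av}"
  and emeasure_vring: "emeasure M (vring av) = 1"
  and emeasure_translate: "A \<in> sets M \<Longrightarrow> a \<in> vring av \<Longrightarrow> emeasure M ((\<lambda>x. x + a) ` A) = emeasure M A"
  using haar unfolding normalized_haar_def by auto

sublocale finite_measure M
  by (rule finite_measureI) (simp add: space_M emeasure_vring)

abbreviation disc :: "'a \<Rightarrow> real \<Rightarrow> 'a set" where
  "disc c r \<equiv> {x \<in> vring av. av (x - c) \<le> r}"

abbreviation residue_class :: "'a \<Rightarrow> 'a set" where
  "residue_class c \<equiv> {y \<in> vring av. av (y - c) < 1}"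

lemma disc_in_sets: "c \<in> vring av \<Longrightarrow> disc c r \<in> sets M"
  unfolding sets_M by (rule sigma_sets.Basic) blast

lemma measure_disc_translate:
  assumes "c \<in> vring av"
  shows "measure M (disc c r) = measure M (disc 0 r)"
proof -
  have "(\<lambda>x. x + c) ` disc 0 r = disc c r"
  proof (intro equalityI subsetI)
    fix x assume "x \<in> disc c r"
    then have "x - c \<in> disc 0 r" using vring_diff assms by auto
    then show "x \<in> (\<lambda>x. x + c) ` disc 0 r" by (force intro: image_eqI[of _ _ "x - c"])
  qed (use assms vring_add in auto)
  then have "emeasure M (disc c r) = emeasure M (disc 0 r)"
    using emeasure_translate[OF disc_in_sets[of 0 r] assms] by (simp add: vring_iff)
  then show ?thesis by (simp add: measure_def)
qed

lemma residue_class_eq: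
  assumes "z \<in> residue_class c"
  shows "residue_class c = residue_class z"
proof -
  have "av (y - z) < 1 \<longleftrightarrow> av (y - c) < 1" for y
    using assms av_add_le_max[of "y - c" "c - z"] av_add_le_max[of "y - z" "z - c"]
      av_minus_commute[of z c] by auto
  then show ?thesis by auto
qed

lemma residue_field_disjoint:
  assumes "C \<in> residue_field av" "D \<in> residue_field av" "C \<noteq> D"
  shows "C \<inter> D = {}"
  using assms residue_class_eq unfolding residue_field_def by blast

lemma scaled_residue_class:
  assumes "c \<in> vring av"
  shows "(\<lambda>y. w ^ n * y) ` residue_class c = disc (w ^ n * c) (av w ^ Suc n)"
proof (intro equalityI subsetI)
  have wn: "0 < av w ^ n" using av_w_pos by simp
  fix x
  have shift: "av (x - w ^ n * c) = av w ^ n * av (x / w ^ n - c)"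
  proof -
    have "x - w ^ n * c = w ^ n * (x / w ^ n - c)" using w_nonzero by (simp add: field_simps)
    then show ?thesis by (simp add: av_mult av_power)
  qed
  {
    assume "x \<in> (\<lambda>y. w ^ n * y) ` residue_class c"
    then obtain y where y: "av y \<le> 1" "av (y - c) < 1" "x = w ^ n * y" by (auto simp: vring_iff)
    have "av (x / w ^ n - c) \<le> av w" using y w_nonzero av_le_av_w by simp
    then have "av (x - w ^ n * c) \<le> av w ^ Suc n"
      using shift wn by (simp add: mult_left_mono)
    moreover have "av x \<le> 1"
      using y av_w_power_le_1 av_nonneg[of y] by (simp add: av_mult av_power mult_le_one)
    ultimately show "x \<in> disc (w ^ n * c) (av w ^ Suc n)" by (simp add: vring_iff)
  next
    assume x: "x \<in> disc (w ^ n * c) (av w ^ Suc n)"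
    then have yc: "av (x / w ^ n - c) \<le> av w" using shift wn by simp
    then have "av (x / w ^ n) \<le> 1"
      using av_add_le_max[of "x / w ^ n - c" c] av_w_lt_1 assms by (simp add: vring_iff)
    then have "x / w ^ n \<in> residue_class c" using yc av_w_lt_1 by (simp add: vring_iff)
    then show "x \<in> (\<lambda>y. w ^ n * y) ` residue_class c"
      using w_nonzero by (force intro: image_eqI[of _ _ "x / w ^ n"])
  }
qed

lemma disc_eq_Union_residue_field:
  "disc 0 (av w ^ n) = (\<Union>C\<in>residue_field av. (\<lambda>y. w ^ n * y) ` C)"
proof (intro equalityI subsetI)
  fix x assume "x \<in> disc 0 (av w ^ n)"
  then have "x / w ^ n \<in> residue_class (x / w ^ n)"
    using av_w_pos by (simp add: vring_iff av_divide av_power divide_le_eq)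
  moreover have "x = w ^ n * (x / w ^ n)" using w_nonzero by simp
  ultimately show "x \<in> (\<Union>C\<in>residue_field av. (\<lambda>y. w ^ n * y) ` C)"
    unfolding residue_field_def by blast
next
  fix x assume "x \<in> (\<Union>C\<in>residue_field av. (\<lambda>y. w ^ n * y) ` C)"
  then obtain y where "av y \<le> 1" "x = w ^ n * y" unfolding residue_field_def by (auto simp: vring_iff)
  then show "x \<in> disc 0 (av w ^ n)"
    using av_w_power_le_1 av_w_pos av_nonneg[of y]
    by (simp add: vring_iff av_mult av_power mult_le_one mult_left_le)
qed

lemma measure_disc_Suc:
  "measure M (disc 0 (av w ^ n)) = real q * measure M (disc 0 (av w ^ Suc n))"
proof -
  let ?A = "\<lambda>C. (\<lambda>y. w ^ n * y) ` C"
  have A: "\<exists>c. c \<in> vring av \<and> ?A C = disc c (av w ^ Suc n)" if C: "C \<in> residue_field av" for C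
  proof -
    obtain c where c: "c \<in> vring av" "C = residue_class c"
      using C unfolding residue_field_def by blast
    then have "w ^ n * c \<in> vring av"
      using av_w_power_le_1 av_nonneg[of c] by (simp add: vring_iff av_mult av_power mult_le_one)
    moreover have "?A C = disc (w ^ n * c) (av w ^ Suc n)"
      using scaled_residue_class[OF c(1)] c(2) by simp
    ultimately show ?thesis by blast
  qed
  have measure_A: "?A C \<in> sets M \<and> measure M (?A C) = measure M (disc 0 (av w ^ Suc n))"
    if C: "C \<in> residue_field av" for C
  proof -
    obtain c where "c \<in> vring av" "?A C = disc c (av w ^ Suc n)" using A[OF C] by blast
    then show ?thesis using disc_in_sets measure_disc_translate by simp
  qed
  then have sets: "?A ` residue_field av \<subseteq> sets M" by blast
  have disjoint: "disjoint_family_on ?A (residue_field av)"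
    unfolding disjoint_family_on_def
  proof (intro ballI impI)
    fix C D assume "C \<in> residue_field av" "D \<in> residue_field av" "C \<noteq> D"
    then have "C \<inter> D = {}" by (rule residue_field_disjoint)
    then show "?A C \<inter> ?A D = {}" using w_nonzero by auto
  qed
  have "measure M (disc 0 (av w ^ n)) = (\<Sum>C\<in>residue_field av. measure M (?A C))"
    unfolding disc_eq_Union_residue_field
    by (rule finite_measure_finite_Union[OF finite_residue_field sets disjoint])
  also have "\<dots> = (\<Sum>C\<in>residue_field av. measure M (disc 0 (av w ^ Suc n)))"
    using measure_A by simp
  finally show ?thesis by simp
qed

lemma measure_disc:
  assumes "c \<in> vring av"
  shows "measure M (disc c (av w ^ n)) = av w ^ n"
proof -
  have "measure M (disc 0 (av w ^ n)) = av w ^ n"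
  proof (induction n)
    case 0
    have "disc 0 1 = vring av" by (auto simp: vring_iff)
    then show ?case using emeasure_vring by (simp add: measure_def)
  next
    case (Suc n)
    have "av w * real q = 1" using av_w_eq av_w_pos by simp
    then have "measure M (disc 0 (av w ^ Suc n)) = av w * (real q * measure M (disc 0 (av w ^ Suc n)))"
      by (simp only: mult.assoc[symmetric] mult_1)
    also have "\<dots> = av w * av w ^ n"
      using Suc measure_disc_Suc[of n] by metis
    finally show ?case by simp
  qed
  then show ?thesis using measure_disc_translate[OF assms] by simp
qed

lemma measure_disc_av:
  assumes "c \<in> vring av" "0 < av z" "av z \<le> 1"
  shows "measure M (disc c (av z)) = av z"
proof -
  obtain k where "av z = av w ^ k" using av_eq_power_of_av_w assms(2,3) av_pos_iff by blast
  then show ?thesis using measure_disc[OF assms(1)] by simp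
qed

end

locale square_root_congruence = normalized_local_field +
  fixes rho eta b :: 'a
  assumes rho_in_vring: "rho \<in> vring av"
    and rho_eq: "rho = eta ^ 2 + b"
    and b_defect: "pideal av b = quadratic_defect av rho"
begin

definition solutions :: "nat \<Rightarrow> 'a set" where
  "solutions l = {x \<in> vring av. x ^ 2 - rho \<in> pideal av (w ^ l)}"

lemma av_b_le_defect:
  assumes "rho - c = y ^ 2"
  shows "av b \<le> av c"
proof -
  have "b \<in> pideal av b" by (simp add: pideal_iff)
  then have "b \<in> quadratic_defect av rho" using b_defect by simp
  then have "b \<in> pideal av c" using assms unfolding quadratic_defect_def by blast
  then show ?thesis by (simp add: pideal_iff)
qed

lemma eta_in_vring: "eta \<in> vring av"
proof -
  have "av (eta ^ 2) \<le> 1"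
    using av_b_le_defect[of rho 0] av_diff_le_max[of rho b] rho_eq rho_in_vring
    by (simp add: vring_iff)
  then show ?thesis using av_nonneg[of eta] by (simp add: vring_iff av_power power_le_one_iff)
qed

lemma av_2_eta_le_1: "av (2 * eta) \<le> 1"
  using av_2_le_1 eta_in_vring av_nonneg[of eta] by (simp add: av_mult vring_iff mult_le_one)

lemma solutions_empty:
  assumes "av (w ^ l) < av b"
  shows "solutions l = {}"
proof -
  have "\<not> av (x ^ 2 - rho) \<le> av (w ^ l)" for x
    using assms av_b_le_defect[of "rho - x ^ 2" x] av_minus_commute[of rho "x ^ 2"] by simp
  then show ?thesis by (auto simp: solutions_def pideal_iff)
qed

lemma solutions_iff_factors:
  assumes "av b \<le> av (w ^ l)"
  shows "x \<in> solutions l \<longleftrightarrow> x \<in> vring av \<and> av (x - eta) * av (x + eta) \<le> av w ^ l"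
proof -
  have "x ^ 2 - rho = (x - eta) * (x + eta) - b"
    using rho_eq by (simp add: algebra_simps power2_eq_square)
  then have "av (x ^ 2 - rho) \<le> av (w ^ l) \<longleftrightarrow> av ((x - eta) * (x + eta)) \<le> av (w ^ l)"
    using assms av_diff_le_max[of "(x - eta) * (x + eta)" b]
      av_add_le_max[of "x ^ 2 - rho" b] by auto
  then show ?thesis by (simp add: solutions_def pideal_iff av_mult av_power)
qed

lemma solutions_eq_disc:
  assumes "av b \<le> av (w ^ l)" and "av (2 * eta) * av (2 * eta) \<le> av w ^ l"
  shows "solutions l = disc eta (av w ^ nat \<lceil>real l / 2\<rceil>)"
proof (intro set_eqI)
  let ?k = "nat \<lceil>real l / 2\<rceil>"
  have square_le_iff: "av y * av y \<le> av w ^ l \<longleftrightarrow> av y \<le> av w ^ ?k" if y: "av y \<le> 1" for y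
  proof (cases "y = 0")
    case False
    then obtain j where j: "av y = av w ^ j" using av_eq_power_of_av_w y by blast
    have "l \<le> 2 * j \<longleftrightarrow> ?k \<le> j" by linarith
    then show ?thesis using j av_w_pos av_w_lt_1
      by (simp add: power_add[symmetric] power_decreasing_iff mult_2[symmetric])
  qed (use av_w_pos in simp)
  fix x
  show "x \<in> solutions l \<longleftrightarrow> x \<in> disc eta (av w ^ ?k)"
  proof (cases "x \<in> vring av")
    case True
    have "x + eta = (x - eta) + 2 * eta" by simp
    have "x \<in> solutions l \<longleftrightarrow> av (x - eta) * av (x + eta) \<le> av w ^ l"
      using solutions_iff_factors[OF assms(1)] True by simp
    also have "\<dots> \<longleftrightarrow> av (x - eta) * av (x - eta) \<le> av w ^ l"
      using av_mult_le_iff_square_le[OF \<open>x + eta = (x - eta) + 2 * eta\<close> assms(2)] .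
    also have "\<dots> \<longleftrightarrow> av (x - eta) \<le> av w ^ ?k"
      using square_le_iff True eta_in_vring vring_diff vring_iff by blast
    finally show ?thesis using True by simp
  qed (simp add: solutions_def)
qed

lemma solutions_eq_two_discs:
  assumes "av b \<le> av (w ^ l)" and "av w ^ l < av (2 * eta) * av (2 * eta)"
  defines "r \<equiv> av (w ^ l / (2 * eta))"
  shows "solutions l = disc eta r \<union> disc (- eta) r"
    and "disc eta r \<inter> disc (- eta) r = {}"
    and "0 < r" "r < 1"
proof -
  have "av (2 * eta) \<noteq> 0" using assms(2) zero_less_power[OF av_w_pos, of l] by (metis less_asym mult_zero_left)
  then have t: "0 < av (2 * eta)" using av_nonneg[of "2 * eta"] by linarith
  have r: "r * av (2 * eta) = av w ^ l" "0 < r" "r < av (2 * eta)"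
    using t assms(2) av_w_pos by (simp_all add: r_def av_divide av_power divide_less_eq)
  show "0 < r" "r < 1" using r av_2_eta_le_1 by auto
  show "solutions l = disc eta r \<union> disc (- eta) r"
  proof (intro set_eqI)
    fix x
    have "x + eta = (x - eta) + 2 * eta" by simp
    from av_mult_le_iff_near[OF this r(1) _ r(3)] r(2)
    have "av (x - eta) * av (x + eta) \<le> av w ^ l \<longleftrightarrow> av (x - eta) \<le> r \<or> av (x + eta) \<le> r"
      by simp
    then show "x \<in> solutions l \<longleftrightarrow> x \<in> disc eta r \<union> disc (- eta) r"
      using solutions_iff_factors[OF assms(1)] by auto
  qed
  show "disc eta r \<inter> disc (- eta) r = {}"
  proof (intro equals0I)
    fix x assume "x \<in> disc eta r \<inter> disc (- eta) r"
    then have "av (x - eta) \<le> r" "av (x + eta) \<le> r" by auto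
    moreover have "av (2 * eta) \<le> max (av (x + eta)) (av (x - eta))"
      using av_diff_le_max[of "x + eta" "x - eta"] by simp
    ultimately show False using r(3) by auto
  qed
qed

end

theorem lemma3p2:
  fixes av :: "'a::field \<Rightarrow> real" and w rho eta b :: 'a and l :: nat and M :: "'a measure"
  assumes "nonarch_local_field av"
    and "av 2 < 1"
    and "normalized_uniformizer av w"
    and "normalized_haar av M"
    and "rho \<in> vring av"
    and "rho = eta ^ 2 + b"
    and "pideal av b = quadratic_defect av rho"
  defines "X \<equiv> measure M {x \<in> vring av. x ^ 2 - rho \<in> pideal av (w ^ l)}"
  shows "(b \<notin> pideal av (w ^ l) \<longrightarrow> X = 0)
    \<and> (b \<in> pideal av (w ^ l) \<and> av (w ^ l) < av (4 * eta ^ 2)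
         \<longrightarrow> X = 2 * av (w ^ l / (2 * eta)))
    \<and> (b \<in> pideal av (w ^ l) \<and> \<not> (av (w ^ l) < av (4 * eta ^ 2))
         \<longrightarrow> X = av w ^ nat \<lceil>real l / 2\<rceil>)"
proof -
  interpret square_root_congruence av w M rho eta b
    using assms(1,3-7) by unfold_locales
  have X: "X = measure M (solutions l)" unfolding X_def solutions_def ..
  have "4 * eta ^ 2 = (2 * eta) * (2 * eta)" by (simp add: power2_eq_square)
  then have four_eta: "av (4 * eta ^ 2) = av (2 * eta) * av (2 * eta)" by (simp only: av_mult)
  have "- eta \<in> vring av" using eta_in_vring by (simp add: vring_iff)
  show ?thesis
  proof (intro conjI impI)
    assume "b \<notin> pideal av (w ^ l)"
    then show "X = 0" using solutions_empty by (simp add: X pideal_iff)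
  next
    assume "b \<in> pideal av (w ^ l) \<and> av (w ^ l) < av (4 * eta ^ 2)"
    then have "av b \<le> av (w ^ l)" "av w ^ l < av (2 * eta) * av (2 * eta)"
      by (simp_all add: pideal_iff four_eta av_power)
    note two_discs = solutions_eq_two_discs[OF this]
    let ?r = "av (w ^ l / (2 * eta))"
    have "X = measure M (disc eta ?r) + measure M (disc (- eta) ?r)"
      unfolding X two_discs(1) using two_discs(2) eta_in_vring \<open>- eta \<in> vring av\<close>
      by (intro finite_measure_Union disc_in_sets)
    also have "\<dots> = 2 * ?r"
      using measure_disc_av[OF eta_in_vring] measure_disc_av[OF \<open>- eta \<in> vring av\<close>] two_discs(3,4)
      by simp
    finally show "X = 2 * ?r" .
  next
    assume "b \<in> pideal av (w ^ l) \<and> \<not> av (w ^ l) < av (4 * eta ^ 2)"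
    then have "av b \<le> av (w ^ l)" "av (2 * eta) * av (2 * eta) \<le> av w ^ l"
      by (simp_all add: pideal_iff four_eta av_power)
    then show "X = av w ^ nat \<lceil>real l / 2\<rceil>"
      by (simp add: X solutions_eq_disc measure_disc eta_in_vring)
  qed
qed

end
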